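(* Let $a\neq0$, $b\in\mathbb{R}$, $c\neq0$, $A_1=(a,b,c)$, $A_2=(-ae^{c},-be^{-c},-c)$, $0<\alpha<\pi$, and put $S=\sqrt{(a^2+1)e^{2c}-2e^{c}+1}$. Let $\epsilon=-1$ if $a>0$ and $\epsilon=+1$ if $a<0$. If $$\cos\alpha>\frac{e^{c}}{S}\cdot\frac{2-4e^{c}+\epsilon aS+e^{2c}\big(2a^2+2+\epsilon aS\big)}{\sqrt{(a^2+1)e^{6c}+e^{2c}\big(a^2+3+4\epsilon aS\big)+e^{4c}\big(6a^2+3+4\epsilon aS\big)-2e^{c}-4e^{3c}-2e^{5c}+1}},$$ then the translation-like $\alpha$-isoptic surface of $\overline{A_1A_2}$ is infinite: it contains points with arbitrarily large $z$-coordinate.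
   Context: $\mathbf{Sol}$ is $\mathbb{R}^3$ with coordinates $(x,y,z)$, group law $(a,b,c)(x,y,z)=(x+ae^{-z},\,y+be^{z},\,z+c)$, and left-invariant metric $ds^2=e^{2z}dx^2+e^{-2z}dy^2+dz^2$. The translation curve starting at the origin with initial unit vector $(u,v,w)$ is $t\mapsto\big(-\tfrac{u}{w}(e^{-wt}-1),\tfrac{v}{w}(e^{wt}-1),wt\big)$ if $w\neq0$ and $t\mapsto(ut,vt,0)$ if $w=0$. For $P=(p_1,p_2,p_3)$ let $T_P(X,Y,Z)=(p_1+Xe^{-p_3},\,p_2+Ye^{p_3},\,p_3+Z)$; the translation curve from $P$ to $Q$ is the $T_P$-image of the translation curve from the origin to $T_P^{-1}(Q)$. The translation-like $\alpha$-isoptic surface of the translation-like segment $\overline{A_1A_2}$ is the set of points $P\notin\{A_1,A_2\}$ such that the angle at $P$, measured with the metric at $P$, between the initial tangent vectors of the translation curves from $P$ to $A_1$ and from $P$ to $A_2$ equals $\alpha$. Equivalently, $P=(x,y,z)$ lies on it iff $\cos\alpha=\dfrac{e^{z}(x+ae^{c})(x-a)+e^{-z}(y+be^{-c})(y-b)+4\sinh\frac{z+c}{2}\sinh\frac{z-c}{2}}{\sqrt{e^{z+c}(x-a)^2+e^{-(z+c)}(y-b)^2+4\sinh^2\frac{z-c}{2}}\sqrt{e^{z-c}(x+ae^{c})^2+e^{-(z-c)}(y+be^{-c})^2+4\sinh^2\frac{z+c}{2}}}$. *)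

theory Defs
  imports "HOL-Analysis.Analysis"
begin

type_synonym pt = "real \<times> real \<times> real"

definition zc :: "pt \<Rightarrow> real" where
  "zc P = snd (snd P)"

text \<open>Translation curve starting at the origin with initial vector d = (u,v,w).\<close>
definition sol_tc :: "pt \<Rightarrow> real \<Rightarrow> pt" where
  "sol_tc d t = (case d of (u, v, w) \<Rightarrow>
     if w \<noteq> 0 then (-(u / w) * (exp (-(w * t)) - 1), (v / w) * (exp (w * t) - 1), w * t)
     else (u * t, v * t, 0))"

definition unit_vec :: "pt \<Rightarrow> bool" where
  "unit_vec d = (case d of (u, v, w) \<Rightarrow> u\<^sup>2 + v\<^sup>2 + w\<^sup>2 = 1)"

definition sol_T :: "pt \<Rightarrow> pt \<Rightarrow> pt" where
  "sol_T P X = (case P of (p1, p2, p3) \<Rightarrow> case X of (x, y, z) \<Rightarrow>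
     (p1 + x * exp (-p3), p2 + y * exp p3, p3 + z))"

definition sol_T_inv :: "pt \<Rightarrow> pt \<Rightarrow> pt" where
  "sol_T_inv P Q = (case P of (p1, p2, p3) \<Rightarrow> case Q of (q1, q2, q3) \<Rightarrow>
     ((q1 - p1) * exp p3, (q2 - p2) * exp (-p3), q3 - p3))"

definition tc_init_tangent :: "pt \<Rightarrow> pt \<Rightarrow> pt \<Rightarrow> bool" where
  "tc_init_tangent P Q v = (\<exists>d t. unit_vec d \<and> 0 < t \<and> sol_tc d t = sol_T_inv P Q \<and>
      ((\<lambda>s. sol_T P (sol_tc d s)) has_vector_derivative v) (at 0))"

definition sol_inner :: "pt \<Rightarrow> pt \<Rightarrow> pt \<Rightarrow> real" where
  "sol_inner P v w = (case P of (p1, p2, p3) \<Rightarrow> case v of (v1, v2, v3) \<Rightarrow> case w of (w1, w2, w3) \<Rightarrow>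
     exp (2 * p3) * v1 * w1 + exp (-(2 * p3)) * v2 * w2 + v3 * w3)"

definition sol_angle :: "pt \<Rightarrow> pt \<Rightarrow> pt \<Rightarrow> real" where
  "sol_angle P v w = arccos (sol_inner P v w / (sqrt (sol_inner P v v) * sqrt (sol_inner P w w)))"

definition isoptic :: "pt \<Rightarrow> pt \<Rightarrow> real \<Rightarrow> pt set" where
  "isoptic A1 A2 \<alpha> = {P. P \<noteq> A1 \<and> P \<noteq> A2 \<and>
     (\<exists>v1 v2. tc_init_tangent P A1 v1 \<and> tc_init_tangent P A2 v2 \<and> sol_angle P v1 v2 = \<alpha>)}"

end

theory Submission
  imports Defs
begin

(* Left translation T_P is an isometry whose linear part sol_dT P carries the Euclidean metric
   at the origin to the Sol metric at P. Hence, when A1 and A2 lie strictly on the same side of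
   the horizontal plane through P, the angle at P is the Euclidean angle between the directions
   tc_dir P A1 and tc_dir P A2. Moving up the vertical line over (x0, b), these directions tend to
   ((x0 - a) e^c, 0, 1) and ((x0 + a e^c) e^-c, 0, 1); x0 is a point where both limits have the same
   length, and there the cosine of their angle is exactly the bound of the hypothesis, so high
   enough the cosine drops below cos alpha. On the same horizontal plane some point sees A1 and A2
   in the same direction (cosine 1), and the intermediate value theorem on the segment between
   the two points yields a point of the isoptic surface at that height. *)

definition sol_dT :: "pt \<Rightarrow> pt \<Rightarrow> pt" where
  "sol_dT P v = (case v of (v1, v2, v3) \<Rightarrow> (v1 * exp (- zc P), v2 * exp (zc P), v3))"

(* Solving sol_tc (u, v, w) t = (X, Y, Z) = T_P^-1 Q forces w \<noteq> 0 when Z \<noteq> 0, and then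
   (u/w, v/w) = (-X / (e^-Z - 1), Y / (e^Z - 1)): the initial direction is a multiple of tc_dir P Q. *)
definition tc_dir :: "pt \<Rightarrow> pt \<Rightarrow> pt" where
  "tc_dir P Q = (case sol_T_inv P Q of (X, Y, Z) \<Rightarrow> (- X / (exp (- Z) - 1), Y / (exp Z - 1), 1))"

definition cos_angle :: "'a::real_inner \<Rightarrow> 'a \<Rightarrow> real" where
  "cos_angle u v = inner u v / (norm u * norm v)"

lemma zc_sol_T_inv: "zc (sol_T_inv P Q) = zc Q - zc P"
  by (cases P; cases Q) (simp add: sol_T_inv_def zc_def)

lemma tc_dir_eq:
  "tc_dir (x, y, z) (q1, q2, q3) =
     ((x - q1) * exp z / (exp (z - q3) - 1), (q2 - y) * exp (- z) / (exp (q3 - z) - 1), 1)"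
proof -
  have "- ((q1 - x) * exp z / d) = (x - q1) * exp z / d" for d
    by (simp only: minus_divide_left minus_mult_left minus_diff_eq)
  then show ?thesis
    by (simp add: tc_dir_def sol_T_inv_def)
qed

lemma tc_dir_nonzero: "tc_dir P Q \<noteq> 0"
  by (simp add: tc_dir_def zero_prod_def split: prod.split)

lemma sol_inner_dT: "sol_inner P (sol_dT P v) (sol_dT P w) = inner v w"
proof -
  obtain p1 p2 p3 where "P = (p1, p2, p3)" by (cases P)
  moreover have "exp (2 * p3) = exp p3 ^ 2" "exp (- (2 * p3)) = exp (- p3) ^ 2"
    by (simp_all flip: exp_of_nat_mult)
  ultimately show ?thesis
    by (cases v; cases w) (simp add: sol_inner_def sol_dT_def zc_def power2_eq_square exp_minus field_simps)
qed

lemma sol_angle_dT: "sol_angle P (sol_dT P v) (sol_dT P w) = arccos (cos_angle v w)"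
  by (simp add: sol_angle_def cos_angle_def sol_inner_dT flip: norm_eq_sqrt_inner)

lemma cos_angle_scaleR:
  assumes "0 < r * s"
  shows "cos_angle (r *\<^sub>R u) (s *\<^sub>R v) = cos_angle u v"
proof -
  have "\<bar>r\<bar> * \<bar>s\<bar> = r * s"
    using assms by (simp flip: abs_mult)
  then have "cos_angle (r *\<^sub>R u) (s *\<^sub>R v) = (r * s) * inner u v / ((r * s) * (norm u * norm v))"
    unfolding cos_angle_def inner_scaleR_left inner_scaleR_right norm_scaleR by (metis mult.assoc mult.left_commute)
  also have "\<dots> = cos_angle u v"
    unfolding cos_angle_def using assms by (intro mult_divide_mult_cancel_left) auto
  finally show ?thesis .
qed

lemma tendsto_cos_angle:
  assumes "(f \<longlongrightarrow> u) F" and "(g \<longlongrightarrow> v) F" and "u \<noteq> 0" and "v \<noteq> 0"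
  shows "((\<lambda>x. cos_angle (f x) (g x)) \<longlongrightarrow> cos_angle u v) F"
  unfolding cos_angle_def using assms by (intro tendsto_intros) auto

lemma cos_angle_self: "v \<noteq> 0 \<Longrightarrow> cos_angle v v = 1"
  by (simp add: cos_angle_def flip: power2_norm_eq_inner power2_eq_square)

lemma unit_vec_iff_norm: "unit_vec d \<longleftrightarrow> norm d = 1"
  by (cases d) (auto simp: unit_vec_def norm_Pair)

lemma sol_T_sol_tc_has_vector_derivative:
  "((\<lambda>s. sol_T P (sol_tc d s)) has_vector_derivative sol_dT P d) (at 0)"
proof -
  obtain p1 p2 p3 u v w where P: "P = (p1, p2, p3)" and d: "d = (u, v, w)"
    by (cases P; cases d)
  have "((\<lambda>s. p1 + (- (u / w) * (exp (- (w * s)) - 1)) * exp (- p3)) has_real_derivative u * exp (- p3)) (at 0)"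
    "((\<lambda>s. p2 + v / w * (exp (w * s) - 1) * exp p3) has_real_derivative v * exp p3) (at 0)"
    if "w \<noteq> 0"
    using that by (auto intro!: derivative_eq_intros)
  moreover have "((\<lambda>s. p1 + u * s * exp (- p3)) has_real_derivative u * exp (- p3)) (at 0)"
    "((\<lambda>s. p2 + v * s * exp p3) has_real_derivative v * exp p3) (at 0)"
    "((\<lambda>s. p3 + w * s) has_real_derivative w) (at 0)"
    by (auto intro!: derivative_eq_intros)
  ultimately show ?thesis
    by (cases "w = 0")
       (auto simp: P d sol_T_def sol_tc_def sol_dT_def zc_def has_real_derivative_iff_has_vector_derivative
             intro!: has_vector_derivative_Pair)
qed

lemma sol_tc_reaches:
  fixes X Y Z :: real
  assumes "Z \<noteq> 0"
  defines "s \<equiv> (- X / (exp (- Z) - 1), Y / (exp Z - 1), 1)"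
  shows "sol_tc ((sgn Z / norm s) *\<^sub>R s) (\<bar>Z\<bar> * norm s) = (X, Y, Z)"
proof -
  have "norm s \<noteq> 0"
    by (simp add: s_def zero_prod_def)
  moreover have "exp (- Z) - 1 \<noteq> 0" "exp Z - 1 \<noteq> 0"
    using assms(1) by simp_all
  ultimately show ?thesis
    using assms(1) by (simp add: sol_tc_def s_def sgn_if field_simps)
qed

lemma tc_init_tangent_tc_dir:
  assumes "zc Q \<noteq> zc P"
  shows "tc_init_tangent P Q (sol_dT P ((sgn (zc Q - zc P) / norm (tc_dir P Q)) *\<^sub>R tc_dir P Q))"
proof -
  obtain X Y Z where inv: "sol_T_inv P Q = (X, Y, Z)"
    by (cases "sol_T_inv P Q")
  then have Z: "Z = zc Q - zc P"
    by (metis zc_sol_T_inv zc_def prod.sel(2))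
  define d where "d = (sgn Z / norm (tc_dir P Q)) *\<^sub>R tc_dir P Q"
  have "unit_vec d"
    using assms tc_dir_nonzero[of P Q] by (simp add: d_def Z unit_vec_iff_norm abs_sgn)
  moreover have "sol_tc d (\<bar>Z\<bar> * norm (tc_dir P Q)) = sol_T_inv P Q"
    using sol_tc_reaches[of Z X Y] assms by (simp add: d_def inv tc_dir_def Z)
  moreover have "0 < \<bar>Z\<bar> * norm (tc_dir P Q)"
    using assms tc_dir_nonzero[of P Q] by (simp add: Z)
  ultimately show ?thesis
    unfolding tc_init_tangent_def d_def Z using sol_T_sol_tc_has_vector_derivative by blast
qed

lemma isoptic_memberI:
  assumes "0 < (zc A1 - zc P) * (zc A2 - zc P)" and "0 \<le> \<alpha>" and "\<alpha> \<le> pi"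
    and "cos_angle (tc_dir P A1) (tc_dir P A2) = cos \<alpha>"
  shows "P \<in> isoptic A1 A2 \<alpha>"
proof -
  define r1 where "r1 = sgn (zc A1 - zc P) / norm (tc_dir P A1)"
  define r2 where "r2 = sgn (zc A2 - zc P) / norm (tc_dir P A2)"
  have ne: "zc A1 \<noteq> zc P" "zc A2 \<noteq> zc P"
    using assms(1) by auto
  have "0 < r1 * r2"
    using assms(1) tc_dir_nonzero[of P A1] tc_dir_nonzero[of P A2]
    by (simp add: r1_def r2_def flip: sgn_mult)
  then have "sol_angle P (sol_dT P (r1 *\<^sub>R tc_dir P A1)) (sol_dT P (r2 *\<^sub>R tc_dir P A2)) = \<alpha>"
    using assms(2-4) by (simp add: sol_angle_dT cos_angle_scaleR arccos_cos)
  moreover have "P \<noteq> A1" "P \<noteq> A2"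
    using ne by auto
  moreover have "tc_init_tangent P A1 (sol_dT P (r1 *\<^sub>R tc_dir P A1))"
    "tc_init_tangent P A2 (sol_dT P (r2 *\<^sub>R tc_dir P A2))"
    using tc_init_tangent_tc_dir ne by (simp_all add: r1_def r2_def)
  ultimately show ?thesis
    unfolding isoptic_def by blast
qed

lemma tendsto_exp_uminus_at_top: "((\<lambda>z::real. exp (- z)) \<longlongrightarrow> 0) at_top"
  using tendsto_inverse_0_at_top[OF exp_at_top] by (simp add: exp_minus)

lemma tc_dir_tendsto_at_top:
  "((\<lambda>z. tc_dir (x, y, z) (q1, q2, q3)) \<longlongrightarrow> ((x - q1) * exp q3, 0, 1)) at_top"
proof -
  have "exp (z - q3) - 1 = exp z * (exp (- q3) - exp (- z))" for z
    by (simp add: exp_diff exp_minus field_simps)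
  then have horizontal: "(x - q1) * exp z / (exp (z - q3) - 1) = (x - q1) / (exp (- q3) - exp (- z))" for z
    by simp
  have vertical: "exp (q3 - z) = exp q3 * exp (- z)" for z
    by (simp flip: exp_add)
  have "((\<lambda>z. (x - q1) / (exp (- q3) - exp (- z))) \<longlongrightarrow> (x - q1) / (exp (- q3) - 0)) at_top"
    "((\<lambda>z. (q2 - y) * exp (- z) / (exp q3 * exp (- z) - 1))
        \<longlongrightarrow> (q2 - y) * 0 / (exp q3 * 0 - 1)) at_top"
    by (intro tendsto_intros tendsto_exp_uminus_at_top; simp)+
  then show ?thesis
    unfolding tc_dir_eq horizontal vertical by (auto intro!: tendsto_Pair simp: exp_minus field_simps)
qed

lemma tc_dir_coincide:
  assumes "q3 \<noteq> r3" and "q3 \<noteq> z" and "r3 \<noteq> z"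
  obtains x y where "tc_dir (x, y, z) (q1, q2, q3) = tc_dir (x, y, z) (r1, r2, r3)"
proof
  define d1 d2 e1 e2 where "d1 = exp (z - q3) - 1" and "d2 = exp (z - r3) - 1"
    and "e1 = exp (q3 - z) - 1" and "e2 = exp (r3 - z) - 1"
  have "d1 \<noteq> 0" "d2 \<noteq> 0" "e1 \<noteq> 0" "e2 \<noteq> 0" "d2 - d1 \<noteq> 0" "e1 - e2 \<noteq> 0"
    using assms by (simp_all add: d1_def d2_def e1_def e2_def)
  then show "tc_dir ((q1 * d2 - r1 * d1) / (d2 - d1), (r2 * e1 - q2 * e2) / (e1 - e2), z) (q1, q2, q3)
      = tc_dir ((q1 * d2 - r1 * d1) / (d2 - d1), (r2 * e1 - q2 * e2) / (e1 - e2), z) (r1, r2, r3)"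
    unfolding tc_dir_eq d1_def[symmetric] d2_def[symmetric] e1_def[symmetric] e2_def[symmetric]
    by (simp add: field_simps)
qed

lemma isoptic_point_at_height:
  assumes "0 < (zc A1 - z) * (zc A2 - z)" and "zc A1 \<noteq> zc A2" and "0 \<le> \<alpha>" and "\<alpha> \<le> pi"
    and "cos_angle (tc_dir (x0, y0, z) A1) (tc_dir (x0, y0, z) A2) \<le> cos \<alpha>"
  obtains P where "P \<in> isoptic A1 A2 \<alpha>" and "zc P = z"
proof -
  obtain q1 q2 q3 r1 r2 r3 where A: "A1 = (q1, q2, q3)" "A2 = (r1, r2, r3)"
    by (cases A1; cases A2)
  have heights: "q3 \<noteq> r3" "q3 \<noteq> z" "r3 \<noteq> z"
    using assms(1,2) by (auto simp: A zc_def)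
  obtain x1 y1 where "tc_dir (x1, y1, z) A1 = tc_dir (x1, y1, z) A2"
    using tc_dir_coincide[OF heights] unfolding A by metis
  define p where "p t = (x0 + t * (x1 - x0), y0 + t * (y1 - y0), z)" for t
  define g where "g t = cos_angle (tc_dir (p t) A1) (tc_dir (p t) A2)" for t
  have "g 0 \<le> cos \<alpha>"
    using assms(5) by (simp add: g_def p_def)
  moreover have "cos \<alpha> \<le> g 1"
    using \<open>tc_dir (x1, y1, z) A1 = _\<close> by (simp add: g_def p_def cos_angle_self tc_dir_nonzero)
  moreover have "continuous_on {0..1} g"
    using heights unfolding g_def p_def A tc_dir_eq cos_angle_def
    by (intro continuous_intros) (auto simp: zero_prod_def)
  ultimately obtain t where "g t = cos \<alpha>"
    using IVT'[of g 0 "cos \<alpha>" 1] by auto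
  then have "p t \<in> isoptic A1 A2 \<alpha>"
    using assms(1,3,4) by (intro isoptic_memberI) (simp_all add: g_def p_def zc_def)
  then show ?thesis
    using that by (simp add: p_def zc_def)
qed

lemma norm_pt: "norm (x, y, z) = sqrt (x\<^sup>2 + y\<^sup>2 + z\<^sup>2)"
  by (simp add: norm_Pair)

lemma cos_angle_vertical_pair:
  fixes A B k :: real
  assumes "0 < k"
  shows "cos_angle (A * k, 0::real, 1::real) (B / k, 0::real, 1::real) =
    k * (A * B + 1) / (sqrt (A\<^sup>2 * k\<^sup>2 + 1) * sqrt (B\<^sup>2 + k\<^sup>2))"
proof -
  have "norm (A * k, 0::real, 1::real) = sqrt (A\<^sup>2 * k\<^sup>2 + 1)"
    by (simp add: norm_pt power_mult_distrib)
  moreover have "(B / k)\<^sup>2 + 1 = (B\<^sup>2 + k\<^sup>2) / k\<^sup>2"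
    using assms by (simp add: power_divide field_simps)
  then have "norm (B / k, 0::real, 1::real) = sqrt (B\<^sup>2 + k\<^sup>2) / k"
    using assms by (simp add: norm_pt real_sqrt_divide)
  moreover have "inner (A * k, 0::real, 1::real) (B / k, 0::real, 1::real) = A * B + 1"
    using assms by simp
  ultimately show ?thesis
    using assms by (simp add: cos_angle_def)
qed

(* x0 is a root of k\<^sup>2 (x - a)\<^sup>2 + 1 = (x + a k)\<^sup>2 + k\<^sup>2, which says that the two vectors have the
   same length. *)
lemma cos_angle_at_equal_length_point:
  fixes a k T :: real
  assumes "0 < k" and "k \<noteq> 1" and T2: "T\<^sup>2 = (a * k)\<^sup>2 + (k - 1)\<^sup>2"
  defines "x0 \<equiv> (a * k + T) / (k - 1)"
  shows "cos_angle ((x0 - a) * k, 0::real, 1::real) ((x0 + a * k) / k, 0::real, 1::real) =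
    k / \<bar>T\<bar> * ((2 - 4 * k + T * a + k\<^sup>2 * (2 * a\<^sup>2 + 2 + T * a)) /
      sqrt ((a\<^sup>2 + 1) * k ^ 6 + k\<^sup>2 * (a\<^sup>2 + 3 + 4 * T * a) + k ^ 4 * (6 * a\<^sup>2 + 3 + 4 * T * a)
            - 2 * k - 4 * k ^ 3 - 2 * k ^ 5 + 1))"
    (is "_ = k / \<bar>T\<bar> * (?num / sqrt ?big)")
proof -
  define A B where "A = x0 - a" and "B = x0 + a * k"
  have A: "(k - 1) * A = a + T" and B: "(k - 1) * B = a * k\<^sup>2 + T"
    using assms(2) by (simp_all add: A_def B_def x0_def field_simps power2_eq_square)
  define G where "G = (a * k\<^sup>2 + T)\<^sup>2 + k\<^sup>2 * (k - 1)\<^sup>2"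
  have "G > 0"
    using assms(1,2) by (simp add: G_def add_nonneg_pos)
  have "(k - 1)\<^sup>2 * (A\<^sup>2 * k\<^sup>2 + 1) = ((k - 1) * A)\<^sup>2 * k\<^sup>2 + (k - 1)\<^sup>2"
    "(k - 1)\<^sup>2 * (B\<^sup>2 + k\<^sup>2) = ((k - 1) * B)\<^sup>2 + k\<^sup>2 * (k - 1)\<^sup>2"
    "(k - 1)\<^sup>2 * (A * B + 1) = ((k - 1) * A) * ((k - 1) * B) + (k - 1)\<^sup>2"
    by algebra+
  then have lengths: "(k - 1)\<^sup>2 * (A\<^sup>2 * k\<^sup>2 + 1) = G" "(k - 1)\<^sup>2 * (B\<^sup>2 + k\<^sup>2) = G"
    and inner: "(k - 1)\<^sup>2 * (A * B + 1) = ?num"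
    unfolding A B G_def using T2 by algebra+
  have "?big * T\<^sup>2 = G\<^sup>2"
    unfolding G_def using T2 by algebra
  moreover have "T \<noteq> 0"
    using T2 assms(2) by auto
  ultimately have "?big = (G / \<bar>T\<bar>)\<^sup>2"
    by (simp add: power_divide field_simps)
  then have "sqrt ?big = G / \<bar>T\<bar>"
    using \<open>G > 0\<close> by simp
  have "A\<^sup>2 * k\<^sup>2 + 1 = G / (k - 1)\<^sup>2" "B\<^sup>2 + k\<^sup>2 = G / (k - 1)\<^sup>2"
    using lengths assms(2) by (simp_all add: field_simps)
  then have "sqrt (A\<^sup>2 * k\<^sup>2 + 1) * sqrt (B\<^sup>2 + k\<^sup>2) = G / (k - 1)\<^sup>2"
    using \<open>G > 0\<close> by (simp flip: real_sqrt_mult power2_eq_square)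
  then have "cos_angle (A * k, 0::real, 1::real) (B / k, 0::real, 1::real) = k * (A * B + 1) / (G / (k - 1)\<^sup>2)"
    by (simp add: cos_angle_vertical_pair[OF assms(1)])
  also have "\<dots> = k * ((k - 1)\<^sup>2 * (A * B + 1)) / G"
    using assms(2) by simp
  also have "\<dots> = k * ?num / G"
    by (simp only: inner)
  also have "\<dots> = k / \<bar>T\<bar> * (?num / sqrt ?big)"
    using \<open>sqrt ?big = G / \<bar>T\<bar>\<close> \<open>T \<noteq> 0\<close> \<open>G > 0\<close> by simp
  finally show ?thesis
    by (simp add: A_def B_def)
qed

lemma cos_angle_at_equal_length_point_exp:
  fixes a c S \<epsilon> :: real
  assumes "c \<noteq> 0" and S: "S = sqrt ((a\<^sup>2 + 1) * exp (2 * c) - 2 * exp c + 1)" and "\<epsilon>\<^sup>2 = 1"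
  defines "x0 \<equiv> (a * exp c + \<epsilon> * S) / (exp c - 1)"
  shows "cos_angle ((x0 - a) * exp c, 0::real, 1::real) ((x0 + a * exp c) * exp (- c), 0::real, 1::real) =
    exp c / S *
      ((2 - 4 * exp c + \<epsilon> * a * S + exp (2 * c) * (2 * a\<^sup>2 + 2 + \<epsilon> * a * S)) /
       sqrt ((a\<^sup>2 + 1) * exp (6 * c) + exp (2 * c) * (a\<^sup>2 + 3 + 4 * \<epsilon> * a * S)
             + exp (4 * c) * (6 * a\<^sup>2 + 3 + 4 * \<epsilon> * a * S)
             - 2 * exp c - 4 * exp (3 * c) - 2 * exp (5 * c) + 1))"
proof -
  define k where "k = exp c"
  have k: "0 < k" "k \<noteq> 1"
    using assms(1) by (simp_all add: k_def)
  have exp_mult: "exp (real n * c) = k ^ n" for n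
    by (simp add: k_def exp_of_nat_mult)
  have "(a\<^sup>2 + 1) * k\<^sup>2 - 2 * k + 1 = (a * k)\<^sup>2 + (k - 1)\<^sup>2"
    by (simp add: power2_eq_square algebra_simps)
  then have S2: "S\<^sup>2 = (a * k)\<^sup>2 + (k - 1)\<^sup>2" and "0 \<le> S"
    using exp_mult[of 2] by (simp_all add: S k_def)
  have "(\<epsilon> * S)\<^sup>2 = (a * k)\<^sup>2 + (k - 1)\<^sup>2" and abs_T: "\<bar>\<epsilon> * S\<bar> = S"
    using S2 \<open>0 \<le> S\<close> assms(3) by (auto simp: power_mult_distrib abs_mult power2_eq_1_iff)
  note general = cos_angle_at_equal_length_point[OF k this(1)]
  have "(x0 + a * k) * exp (- c) = (x0 + a * k) / k"
    by (simp add: k_def exp_minus divide_inverse)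
  moreover have "exp (2 * c) = k\<^sup>2" "exp (3 * c) = k ^ 3" "exp (4 * c) = k ^ 4" "exp (5 * c) = k ^ 5"
    "exp (6 * c) = k ^ 6"
    using exp_mult[of 2] exp_mult[of 3] exp_mult[of 4] exp_mult[of 5] exp_mult[of 6] by simp_all
  ultimately show ?thesis
    using general unfolding abs_T x0_def k_def[symmetric] by (simp only: mult_ac)
qed

theorem lemma4p3:
  fixes a b c \<alpha> S \<epsilon> :: real
  assumes "a \<noteq> 0" and "c \<noteq> 0" and "0 < \<alpha>" and "\<alpha> < pi"
    and "S = sqrt ((a\<^sup>2 + 1) * exp (2 * c) - 2 * exp c + 1)"
    and "\<epsilon> = (if a > 0 then -1 else 1)"
    and "cos \<alpha> > exp c / S *
      ((2 - 4 * exp c + \<epsilon> * a * S + exp (2 * c) * (2 * a\<^sup>2 + 2 + \<epsilon> * a * S)) /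
       sqrt ((a\<^sup>2 + 1) * exp (6 * c) + exp (2 * c) * (a\<^sup>2 + 3 + 4 * \<epsilon> * a * S)
             + exp (4 * c) * (6 * a\<^sup>2 + 3 + 4 * \<epsilon> * a * S)
             - 2 * exp c - 4 * exp (3 * c) - 2 * exp (5 * c) + 1))"
  shows "\<forall>M. \<exists>P \<in> isoptic (a, b, c) (- a * exp c, - b * exp (- c), - c) \<alpha>. zc P > M"
proof
  fix M :: real
  define x0 where "x0 = (a * exp c + \<epsilon> * S) / (exp c - 1)"
  let ?A1 = "(a, b, c)" and ?A2 = "(- a * exp c, - b * exp (- c), - c)"
  let ?cos = "\<lambda>z. cos_angle (tc_dir (x0, b, z) ?A1) (tc_dir (x0, b, z) ?A2)"
  let ?limit = "cos_angle ((x0 - a) * exp c, 0::real, 1::real) ((x0 + a * exp c) * exp (- c), 0::real, 1::real)"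
  have "\<epsilon>\<^sup>2 = 1"
    using assms(6) by simp
  have "(?cos \<longlongrightarrow> ?limit) at_top"
    using tc_dir_tendsto_at_top[of x0 b a b c]
      tc_dir_tendsto_at_top[of x0 b "- a * exp c" "- b * exp (- c)" "- c"]
    by (intro tendsto_cos_angle) (simp_all add: zero_prod_def)
  moreover have "?limit < cos \<alpha>"
    using cos_angle_at_equal_length_point_exp[OF assms(2,5) \<open>\<epsilon>\<^sup>2 = 1\<close>] assms(7)
    by (simp add: x0_def)
  ultimately have "\<forall>\<^sub>F z in at_top. ?cos z < cos \<alpha>"
    by (rule order_tendstoD)
  moreover have "\<forall>\<^sub>F z in at_top. max M \<bar>c\<bar> < z"
    by (rule eventually_gt_at_top)
  ultimately obtain z where z: "?cos z < cos \<alpha>" "max M \<bar>c\<bar> < z"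
    using eventually_happens'[OF trivial_limit_at_top_linorder] eventually_conj by blast
  have "0 < (zc ?A1 - z) * (zc ?A2 - z)" "zc ?A1 \<noteq> zc ?A2"
    using z(2) assms(2) by (auto simp: zc_def intro!: mult_neg_neg)
  then obtain P where "P \<in> isoptic ?A1 ?A2 \<alpha>" "zc P = z"
    using isoptic_point_at_height z(1) assms(3,4) by (metis less_eq_real_def)
  then show "\<exists>P \<in> isoptic ?A1 ?A2 \<alpha>. zc P > M"
    using z(2) by auto
qed

end
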